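(* Suppose $f$ is twice differentiable at every point of $\mathbb{R}^{n\times p}$, and let $X\in\mathcal{S}_{n,p}$ satisfy $\nabla h(X)=0$. Then for every $D_1\in\mathcal{T}_X$ and $D_2\in\mathcal{N}_X$, $$\langle D_2,\nabla^2h(X)[D_2]\rangle\ge(2\beta-M_2)\|D_2\|_F^2,\qquad \langle D_1,\nabla^2h(X)[D_2]\rangle=0 .$$
   Context: $f:\mathbb{R}^{n\times p}\to\mathbb{R}$ is differentiable with $f,\nabla f$ locally Lipschitz. $\langle A,B\rangle=\mathrm{tr}(A^\top B)$, $\Phi(M):=\frac12(M+M^\top)$. $\mathcal{S}_{n,p}=\{X:X^\top X=I_p\}$; for $X\in\mathcal{S}_{n,p}$, $\mathcal{T}_X:=\{D:\Phi(D^\top X)=0\}$ and $\mathcal{N}_X:=\{X\Lambda:\Lambda\in\mathbb{R}^{p\times p},\ \Lambda=\Lambda^\top\}$. $\mathcal{A}(X):=\frac32I_p-\frac12X^\top X$, $g(X):=f(X\mathcal{A}(X))$, $h(X):=g(X)+\frac\beta4\|X^\top X-I_p\|_F^2$ with $\beta>0$. $\Omega:=\{X:\|X\|_2\le1+\frac1{12}\}$ and $M_2:=\sup_{X\ne Y\in\Omega}\frac{\|\nabla g(X)-\nabla g(Y)\|_F}{\|X-Y\|_F}$. *)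

theory Defs
  imports "HOL-Analysis.Analysis"
begin

text \<open>Matrices in R^(n x p) are modelled as real^'p^'n. The Frobenius inner product
  tr(A^T B) is the Euclidean inner product (\<bullet>) on this type, and the Frobenius norm is norm.\<close>

definition grad :: "(real^'p^'n \<Rightarrow> real) \<Rightarrow> real^'p^'n \<Rightarrow> real^'p^'n" where
  "grad F X = (SOME G. (F has_derivative (\<lambda>D. G \<bullet> D)) (at X))"

definition hess :: "(real^'p^'n \<Rightarrow> real) \<Rightarrow> real^'p^'n \<Rightarrow> real^'p^'n \<Rightarrow> real^'p^'n" where
  "hess F X D = frechet_derivative (grad F) (at X) D"

definition symPart :: "real^'p^'p \<Rightarrow> real^'p^'p" where
  "symPart M = (1/2) *\<^sub>R (M + transpose M)"

definition Stiefel :: "(real^'p^'n) set" where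
  "Stiefel = {X. transpose X ** X = mat 1}"

definition tangentSp :: "real^'p^'n \<Rightarrow> (real^'p^'n) set" where
  "tangentSp X = {D. symPart (transpose D ** X) = 0}"

definition normalSp :: "real^'p^'n \<Rightarrow> (real^'p^'n) set" where
  "normalSp X = {X ** L | L. transpose L = L}"

definition Acal :: "real^'p^'n \<Rightarrow> real^'p^'p" where
  "Acal X = (3/2) *\<^sub>R mat 1 - (1/2) *\<^sub>R (transpose X ** X)"

definition gfun :: "(real^'p^'n \<Rightarrow> real) \<Rightarrow> real^'p^'n \<Rightarrow> real" where
  "gfun f X = f (X ** Acal X)"

definition hfun :: "(real^'p^'n \<Rightarrow> real) \<Rightarrow> real \<Rightarrow> real^'p^'n \<Rightarrow> real" where
  "hfun f \<beta> X = gfun f X + \<beta> / 4 * (norm (transpose X ** X - mat 1))^2"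

definition spec_norm :: "real^'p^'n \<Rightarrow> real" where
  "spec_norm X = onorm (\<lambda>v. X *v v)"

definition OmegaSet :: "(real^'p^'n) set" where
  "OmegaSet = {X. spec_norm X \<le> 1 + 1/12}"

definition M2 :: "(real^'p^'n \<Rightarrow> real) \<Rightarrow> real" where
  "M2 f = (SUP XY \<in> {(X, Y). X \<in> OmegaSet \<and> Y \<in> OmegaSet \<and> X \<noteq> Y}.
            norm (grad (gfun f) (fst XY) - grad (gfun f) (snd XY)) / norm (fst XY - snd XY))"

definition locally_lipschitz :: "('a::metric_space \<Rightarrow> 'b::metric_space) \<Rightarrow> bool" where
  "locally_lipschitz F = (\<forall>x. \<exists>e>0. \<exists>L. L-lipschitz_on (cball x e) F)"

end

(* Write Q(Y) = Y A(Y). The derivative JA Y of Q at Y is self-adjoint for the Frobenius inner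
   product, so grad g(Y) = JA Y (grad f(Q Y)), and grad h adds the penalty gradient
   beta Y (Y^T Y - I), which vanishes on the Stiefel manifold. At a Stiefel point X we have
   A(X) = I and JA X D = D - X sym(X^T D); this map kills the normal space, and criticality
   forces grad f(X) = X S with S symmetric. Differentiating grad g along D = X L with L symmetric
   therefore yields X M with M symmetric, while the penalty contributes 2 beta D. So
   hess h(X)[D] = X M + 2 beta D, which is orthogonal to every tangent direction D1 because
   X^T D1 is skew-symmetric. For the lower bound, the grad g part is the limit of difference
   quotients of grad g inside Omega (X is an interior point of Omega), each bounded by M2 |D|;
   grad g is Lipschitz on the bounded set Omega, so the supremum M2 is finite. *)

theory Submission
  imports Defs
begin

section \<open>Matrix algebra and the Frobenius inner product\<close>

lemma matrix_add_rdistrib: "((A::'a::semiring_1^'n^'m) + B) ** C = A ** C + B ** C"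
  by (vector matrix_matrix_mult_def sum.distrib[symmetric] field_simps)

lemma matrix_diff_ldistrib: "(A::'a::ring_1^'n^'m) ** (B - C) = A ** B - A ** C"
  by (vector matrix_matrix_mult_def sum_subtractf[symmetric] field_simps)

lemma matrix_scaleR_right: "(A::real^'n^'m) ** (k *\<^sub>R B) = k *\<^sub>R (A ** B)"
  by (simp add: matrix_scalar_ac scalar_matrix_assoc)

lemma matrix_scaleR_left: "(k *\<^sub>R A::real^'n^'m) ** B = k *\<^sub>R (A ** B)"
  by (simp add: scalar_matrix_assoc)

lemma matrix_minus_right: "(A::real^'n^'m) ** (- B) = - (A ** B)"
  using matrix_scaleR_right[of A "-1" B] by simp

lemma transpose_add: "transpose ((A::'a::semiring_1^'n^'m) + B) = transpose A + transpose B"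
  by (simp add: transpose_def vec_eq_iff)

lemma transpose_diff: "transpose ((A::'a::ring_1^'n^'m) - B) = transpose A - transpose B"
  by (simp add: transpose_def vec_eq_iff)

lemma transpose_zero: "transpose (0::'a::semiring_1^'n^'m) = 0"
  by (simp add: transpose_def vec_eq_iff)

lemma transpose_minus: "transpose (- A::'a::ring_1^'n^'m) = - transpose A"
  by (simp add: transpose_def vec_eq_iff)

lemma inner_matrix_eq_sum: "(A::real^'n^'m) \<bullet> B = (\<Sum>i\<in>UNIV. \<Sum>j\<in>UNIV. A$i$j * B$i$j)"
  by (simp add: inner_vec_def)

lemma inner_transpose: "transpose (A::real^'n^'m) \<bullet> B = A \<bullet> transpose B"
  unfolding inner_matrix_eq_sum transpose_def by (subst sum.swap) (simp add: mult.commute)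

lemma inner_matrix_mult_left: "((A::real^'n^'m) ** B) \<bullet> (C::real^'p^'m) = B \<bullet> (transpose A ** C)"
  unfolding inner_matrix_eq_sum matrix_matrix_mult_def transpose_def
  by (simp add: sum_distrib_left sum_distrib_right mult_ac sum.swap[of _ "UNIV::'m set"])
     (rule sum.cong[OF refl], rule sum.swap)

lemma inner_matrix_mult_right: "((A::real^'n^'m) ** B) \<bullet> (C::real^'p^'m) = A \<bullet> (C ** transpose B)"
proof -
  have "(A ** B) \<bullet> C = (transpose B ** transpose A) \<bullet> transpose C"
    using inner_transpose[of "transpose (A ** B)" C] by (simp add: matrix_transpose_mul)
  also have "\<dots> = A \<bullet> (C ** transpose B)"
    by (simp add: inner_matrix_mult_left inner_transpose matrix_transpose_mul)
  finally show ?thesis .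
qed

lemma inner_skew_symmetric:
  fixes K L :: "real^'n^'n"
  assumes "transpose K = - K" and "transpose L = L"
  shows "K \<bullet> L = 0"
  using inner_transpose[of K L] assms by simp

lemma symPart_symmetric: "transpose (symPart M) = symPart M"
  by (simp add: symPart_def transpose_scalar transpose_add add.commute)

lemma symPart_of_symmetric: "transpose L = L \<Longrightarrow> symPart L = L"
  by (simp add: symPart_def scaleR_2[symmetric])

lemma bounded_linear_symPart: "bounded_linear symPart"
  unfolding linear_conv_bounded_linear[symmetric]
  by (auto intro!: linearI simp: symPart_def transpose_add transpose_scalar algebra_simps)

lemma symPart_add: "symPart (M + N) = symPart M + symPart N"
  using linear_add[OF bounded_linear.linear[OF bounded_linear_symPart]] .

lemma symPart_zero: "symPart 0 = 0"
  by (simp add: symPart_def transpose_zero)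

lemma inner_symPart_commute: "M \<bullet> symPart N = symPart M \<bullet> N"
  by (simp add: symPart_def inner_add_left inner_add_right inner_transpose)

lemma bounded_bilinear_matrix_mult: "bounded_bilinear ((**) :: real^'n^'m \<Rightarrow> real^'p^'n \<Rightarrow> real^'p^'m)"
  unfolding bilinear_conv_bounded_bilinear[symmetric] bilinear_def
  by (auto intro!: linearI simp: matrix_add_ldistrib matrix_add_rdistrib
      matrix_scaleR_left matrix_scaleR_right)

lemma bounded_linear_transpose: "bounded_linear (transpose :: real^'n^'m \<Rightarrow> real^'m^'n)"
  unfolding linear_conv_bounded_linear[symmetric]
  by (auto intro!: linearI simp: transpose_add transpose_scalar)

lemma has_derivative_matrix_mult[derivative_intros]:
  fixes F :: "'a::real_normed_vector \<Rightarrow> real^'n^'m" and G :: "'a \<Rightarrow> real^'p^'n"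
  assumes "(F has_derivative F') (at x within s)" and "(G has_derivative G') (at x within s)"
  shows "((\<lambda>y. F y ** G y) has_derivative (\<lambda>h. F x ** G' h + F' h ** G x)) (at x within s)"
  using bounded_bilinear.FDERIV[OF bounded_bilinear_matrix_mult assms] .

lemma has_derivative_transpose[derivative_intros]:
  fixes F :: "'a::real_normed_vector \<Rightarrow> real^'n^'m"
  assumes "(F has_derivative F') net"
  shows "((\<lambda>y. transpose (F y)) has_derivative (\<lambda>h. transpose (F' h))) net"
  using bounded_linear.has_derivative[OF bounded_linear_transpose assms] .

lemma has_derivative_symPart[derivative_intros]:
  assumes "(F has_derivative F') net"
  shows "((\<lambda>y. symPart (F y)) has_derivative (\<lambda>h. symPart (F' h))) net"
  using bounded_linear.has_derivative[OF bounded_linear_symPart assms] .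

lemma has_derivative_grad:
  fixes F :: "real^'p^'n \<Rightarrow> real"
  assumes "F differentiable (at Y)"
  shows "(F has_derivative (\<lambda>D. grad F Y \<bullet> D)) (at Y)"
proof -
  obtain L where L: "(F has_derivative L) (at Y)"
    using assms by (auto simp: differentiable_def)
  have "L = (\<lambda>D. adjoint L 1 \<bullet> D)"
    using adjoint_works[OF has_derivative_linear[OF L], of _ 1] by (simp add: fun_eq_iff inner_commute)
  then have "\<exists>G. (F has_derivative (\<lambda>D. G \<bullet> D)) (at Y)"
    using L by metis
  then show ?thesis
    unfolding grad_def by (rule someI_ex)
qed

lemma grad_eqI:
  fixes F :: "real^'p^'n \<Rightarrow> real"
  assumes "(F has_derivative (\<lambda>D. G \<bullet> D)) (at Y)"
  shows "grad F Y = G"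
proof -
  have "(\<lambda>D. grad F Y \<bullet> D) = (\<lambda>D. G \<bullet> D)"
    using has_derivative_unique assms has_derivative_grad differentiableI by blast
  then have "(grad F Y - G) \<bullet> (grad F Y - G) = 0"
    by (metis inner_diff_left right_minus_eq)
  then show ?thesis by simp
qed

section \<open>Lipschitz continuity on bounded sets\<close>

definition lipschitz_on_bounded_sets :: "('a::metric_space \<Rightarrow> 'b::metric_space) \<Rightarrow> bool" where
  "lipschitz_on_bounded_sets F \<longleftrightarrow> (\<forall>S. bounded S \<longrightarrow> (\<exists>C. C-lipschitz_on S F))"

lemma bounded_image_lipschitz_on:
  fixes F :: "'a::heine_borel \<Rightarrow> 'b::heine_borel"
  assumes "C-lipschitz_on S F" and "bounded S"
  shows "bounded (F ` S)"
  by (rule bounded_uniformly_continuous_image[OF lipschitz_on_uniformly_continuous[OF assms(1)] assms(2)])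

lemma lipschitz_on_bounded_sets_const: "lipschitz_on_bounded_sets (\<lambda>_. c)"
  unfolding lipschitz_on_bounded_sets_def by (auto intro: lipschitz_on_constant)

lemma lipschitz_on_bounded_sets_ident: "lipschitz_on_bounded_sets (\<lambda>x. x)"
  unfolding lipschitz_on_bounded_sets_def by (auto intro: lipschitz_on_id)

lemma lipschitz_on_bounded_sets_compose:
  fixes F :: "'a::heine_borel \<Rightarrow> 'b::heine_borel"
  assumes G: "lipschitz_on_bounded_sets G" and F: "lipschitz_on_bounded_sets F"
  shows "lipschitz_on_bounded_sets (\<lambda>x. G (F x))"
  unfolding lipschitz_on_bounded_sets_def
proof (intro allI impI)
  fix S :: "'a set" assume S: "bounded S"
  obtain C where C: "C-lipschitz_on S F"
    using F S unfolding lipschitz_on_bounded_sets_def by auto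
  obtain K where "K-lipschitz_on (F ` S) G"
    using G bounded_image_lipschitz_on[OF C S] unfolding lipschitz_on_bounded_sets_def by auto
  then show "\<exists>C. C-lipschitz_on S (\<lambda>x. G (F x))"
    using lipschitz_on_compose2[OF C] by auto
qed

lemma lipschitz_on_bounded_sets_linear:
  assumes "bounded_linear T"
  shows "lipschitz_on_bounded_sets T"
  unfolding lipschitz_on_bounded_sets_def
proof (intro allI impI)
  fix S
  obtain B where "B-lipschitz_on S T"
    using bounded_linear.lipschitz_boundE[OF assms] .
  then show "\<exists>C. C-lipschitz_on S T" ..
qed

lemma lipschitz_on_bounded_sets_diff:
  fixes F G :: "'a::metric_space \<Rightarrow> 'b::real_normed_vector"
  assumes "lipschitz_on_bounded_sets F" and "lipschitz_on_bounded_sets G"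
  shows "lipschitz_on_bounded_sets (\<lambda>x. F x - G x)"
  unfolding lipschitz_on_bounded_sets_def
proof (intro allI impI)
  fix S :: "'a set" assume "bounded S"
  then obtain C D where C: "C-lipschitz_on S F" and D: "D-lipschitz_on S G"
    using assms unfolding lipschitz_on_bounded_sets_def by meson
  show "\<exists>C. C-lipschitz_on S (\<lambda>x. F x - G x)"
    using lipschitz_on_diff[OF C D] ..
qed

lemma lipschitz_on_bounded_sets_bilinear:
  fixes F :: "'a::heine_borel \<Rightarrow> 'b::euclidean_space" and G :: "'a \<Rightarrow> 'c::euclidean_space"
  assumes B: "bounded_bilinear B" and F: "lipschitz_on_bounded_sets F" and G: "lipschitz_on_bounded_sets G"
  shows "lipschitz_on_bounded_sets (\<lambda>x. B (F x) (G x))"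
  unfolding lipschitz_on_bounded_sets_def
proof (intro allI impI)
  fix S :: "'a set" assume S: "bounded S"
  obtain CF CG where CF: "CF-lipschitz_on S F" and CG: "CG-lipschitz_on S G"
    using F G S unfolding lipschitz_on_bounded_sets_def by meson
  obtain MF where MF: "\<And>x. x \<in> S \<Longrightarrow> norm (F x) \<le> MF" and "MF > 0"
    using bounded_image_lipschitz_on[OF CF S] unfolding bounded_pos by auto
  obtain MG where MG: "\<And>x. x \<in> S \<Longrightarrow> norm (G x) \<le> MG" and "MG > 0"
    using bounded_image_lipschitz_on[OF CG S] unfolding bounded_pos by auto
  have "CF \<ge> 0" and "CG \<ge> 0"
    using lipschitz_on_nonneg[OF CF] lipschitz_on_nonneg[OF CG] .
  obtain K where K: "\<And>a b. norm (B a b) \<le> norm a * norm b * K" and "K > 0"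
    using bounded_bilinear.pos_bounded[OF B] by blast
  have "(K * (CF * MG + MF * CG))-lipschitz_on S (\<lambda>x. B (F x) (G x))"
  proof (rule lipschitz_onI)
    fix x y assume x: "x \<in> S" and y: "y \<in> S"
    have "B (F x) (G x) - B (F y) (G y) = B (F x - F y) (G x) + B (F y) (G x - G y)"
      by (simp add: bounded_bilinear.diff_left[OF B] bounded_bilinear.diff_right[OF B])
    then have "dist (B (F x) (G x)) (B (F y) (G y))
        \<le> K * (norm (F x - F y) * norm (G x) + norm (F y) * norm (G x - G y))"
      using K[of "F x - F y" "G x"] K[of "F y" "G x - G y"]
      by (simp add: dist_norm distrib_left mult_ac) (metis norm_triangle_le add_mono)
    also have "\<dots> \<le> K * (CF * dist x y * MG + MF * (CG * dist x y))"
      using lipschitz_onD[OF CF x y] lipschitz_onD[OF CG x y] MF[OF y] MG[OF x] \<open>K > 0\<close>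
        \<open>CF \<ge> 0\<close> \<open>MF > 0\<close>
      by (intro mult_left_mono add_mono mult_mono) (auto simp: dist_norm)
    finally show "dist (B (F x) (G x)) (B (F y) (G y)) \<le> K * (CF * MG + MF * CG) * dist x y"
      by (simp add: algebra_simps)
  next
    show "0 \<le> K * (CF * MG + MF * CG)"
      using \<open>CF \<ge> 0\<close> \<open>CG \<ge> 0\<close> \<open>MF > 0\<close> \<open>MG > 0\<close> \<open>K > 0\<close> by simp
  qed
  then show "\<exists>C. C-lipschitz_on S (\<lambda>x. B (F x) (G x))" ..
qed

lemma locally_lipschitz_imp_lipschitz_on_bounded_sets:
  fixes G :: "'a::euclidean_space \<Rightarrow> 'b::metric_space"
  assumes "locally_lipschitz G"
  shows "lipschitz_on_bounded_sets G"
  unfolding lipschitz_on_bounded_sets_def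
proof (intro allI impI)
  fix T :: "'a set" assume "bounded T"
  then obtain r x0 where T: "T \<subseteq> cball x0 r"
    unfolding bounded_subset_cball by auto
  have "local_lipschitz {0::real} (cball x0 r) (\<lambda>_. G)"
  proof (rule local_lipschitzI)
    fix t x
    obtain e L where "e > 0" and L: "L-lipschitz_on (cball x e) G"
      using assms unfolding locally_lipschitz_def by meson
    then show "\<exists>u>0. \<exists>L. \<forall>t\<in>cball t u \<inter> {0::real}. L-lipschitz_on (cball x u \<inter> cball x0 r) G"
      using lipschitz_on_subset[OF L, of "cball x e \<inter> cball x0 r"] by auto
  qed
  then obtain L where "L-lipschitz_on (cball x0 r) G"
    by (rule local_lipschitz_compact_implies_lipschitz[OF _ compact_cball]) auto
  then show "\<exists>L. L-lipschitz_on T G"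
    using T by (auto intro: lipschitz_on_subset)
qed

lemma tendsto_difference_quotient:
  assumes "(F has_derivative F') (at x)"
  shows "((\<lambda>h. (F (x + h *\<^sub>R d) - F x) /\<^sub>R h) \<longlongrightarrow> F' d) (at 0)"
proof -
  have line: "((\<lambda>h::real. x + h *\<^sub>R d) has_derivative (\<lambda>h. h *\<^sub>R d)) (at 0)"
    by (auto intro!: derivative_eq_intros)
  have "((\<lambda>h. F (x + h *\<^sub>R d)) has_derivative (\<lambda>h. F' (h *\<^sub>R d))) (at 0)"
    using has_derivative_compose[OF line, of F F'] assms by simp
  then have "((\<lambda>h. F (x + h *\<^sub>R d)) has_derivative (\<lambda>h. h *\<^sub>R F' d)) (at 0)"
    by (simp add: linear_cmul[OF has_derivative_linear[OF assms]])
  then have "((\<lambda>h. norm (F (x + h *\<^sub>R d) - F x - h *\<^sub>R F' d) / norm h) \<longlongrightarrow> 0) (at 0)"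
    unfolding has_derivative_at by simp
  moreover have "norm (a - h *\<^sub>R F' d) / norm h = norm (a /\<^sub>R h - F' d)" if "h \<noteq> 0" for a h
  proof -
    have "a /\<^sub>R h - F' d = (a - h *\<^sub>R F' d) /\<^sub>R h"
      using that by (simp add: scaleR_diff_right)
    then show ?thesis
      by (simp add: divide_inverse_commute)
  qed
  then have "\<forall>\<^sub>F h in at 0. norm (F (x + h *\<^sub>R d) - F x - h *\<^sub>R F' d) / norm h
      = norm ((F (x + h *\<^sub>R d) - F x) /\<^sub>R h - F' d)"
    by (auto simp: eventually_at_filter)
  ultimately have "((\<lambda>h. norm ((F (x + h *\<^sub>R d) - F x) /\<^sub>R h - F' d)) \<longlongrightarrow> 0) (at 0)"
    by (rule Lim_transform_eventually)
  then show ?thesis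
    by (simp only: tendsto_norm_zero_iff LIM_zero_iff)
qed

(* The Lipschitz hypothesis only serves to make the supremum finite: the SUP of an unbounded set
   of reals carries no information. *)
lemma norm_derivative_le_SUP_difference_quotient:
  fixes F :: "'a::real_normed_vector \<Rightarrow> 'b::real_normed_vector"
  assumes F: "(F has_derivative F') (at x)" and x: "x \<in> interior S" and C: "C-lipschitz_on S F"
  shows "norm (F' d) \<le> (SUP yz\<in>{(y, z). y \<in> S \<and> z \<in> S \<and> y \<noteq> z}.
           norm (F (fst yz) - F (snd yz)) / norm (fst yz - snd yz)) * norm d"
    (is "_ \<le> Sup (?q ` ?P) * _")
proof (cases "d = 0")
  case True
  then show ?thesis
    using linear_0[OF has_derivative_linear[OF F]] by simp
next
  case False
  have bdd: "bdd_above (?q ` ?P)"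
  proof (rule bdd_aboveI2)
    fix yz assume "yz \<in> ?P"
    then show "?q yz \<le> C"
      using lipschitz_onD[OF C] by (auto simp: dist_norm divide_le_eq)
  qed
  have "((\<lambda>h. x + h *\<^sub>R d) \<longlongrightarrow> x) (at_right (0::real))"
    by (auto intro!: tendsto_eq_intros)
  then have "\<forall>\<^sub>F h in at_right 0. x + h *\<^sub>R d \<in> interior S"
    by (rule topological_tendstoD[OF _ open_interior x])
  moreover have "\<forall>\<^sub>F h in at_right (0::real). 0 < h"
    by (rule eventually_at_right_less)
  ultimately have "\<forall>\<^sub>F h in at_right 0. 0 < h \<and> x + h *\<^sub>R d \<in> S"
    by eventually_elim (use interior_subset in auto)
  then have "\<forall>\<^sub>F h in at_right 0. norm ((F (x + h *\<^sub>R d) - F x) /\<^sub>R h) \<le> Sup (?q ` ?P) * norm d"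
  proof (rule eventually_mono)
    fix h :: real assume h: "0 < h \<and> x + h *\<^sub>R d \<in> S"
    then have "(x + h *\<^sub>R d, x) \<in> ?P"
      using x interior_subset False by auto
    then have "?q (x + h *\<^sub>R d, x) \<le> Sup (?q ` ?P)"
      by (rule cSUP_upper[OF _ bdd])
    then show "norm ((F (x + h *\<^sub>R d) - F x) /\<^sub>R h) \<le> Sup (?q ` ?P) * norm d"
      using h False by (simp add: divide_le_eq mult_ac, simp add: field_simps)
  qed
  moreover have "((\<lambda>h. norm ((F (x + h *\<^sub>R d) - F x) /\<^sub>R h)) \<longlongrightarrow> norm (F' d)) (at_right 0)"
    using tendsto_norm[OF tendsto_difference_quotient[OF F]] by (rule tendsto_within_subset) simp
  ultimately show ?thesis
    by (intro tendsto_upperbound) auto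
qed

section \<open>The spectral-norm ball Omega\<close>

lemma spec_norm_le_norm: "spec_norm (E::real^'p^'n) \<le> real CARD('n) * real CARD('p) * norm E"
  unfolding spec_norm_def
  by (rule onorm_le_matrix_component[unfolded eta_contract_eq])
     (rule order_trans[OF component_le_norm_cart Finite_Cartesian_Product.norm_nth_le])

lemma spec_norm_add: "spec_norm ((A::real^'p^'n) + B) \<le> spec_norm A + spec_norm B"
  unfolding spec_norm_def matrix_vector_mult_add_rdistrib
  by (rule onorm_triangle[OF matrix_vector_mul_bounded_linear matrix_vector_mul_bounded_linear])

lemma spec_norm_Stiefel:
  assumes "X \<in> Stiefel"
  shows "spec_norm X \<le> 1"
  unfolding spec_norm_def
proof (rule onorm_le)
  fix v
  have "(X *v v) \<bullet> (X *v v) = v \<bullet> v"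
    using dot_lmul_matrix[of v "transpose X" "X *v v"] assms
    by (simp add: matrix_vector_mul_assoc Stiefel_def)
  then show "norm (X *v v) \<le> 1 * norm v"
    by (simp add: norm_eq_sqrt_inner)
qed

lemma Stiefel_subset_interior_OmegaSet: "(Stiefel :: (real^'p^'n) set) \<subseteq> interior OmegaSet"
proof
  fix X :: "real^'p^'n" assume X: "X \<in> Stiefel"
  define c where "c = real CARD('n) * real CARD('p)"
  have "c > 0"
    by (simp add: c_def)
  have "ball X (1 / (12 * c)) \<subseteq> OmegaSet"
  proof
    fix Y assume "Y \<in> ball X (1 / (12 * c))"
    then have "c * norm (Y - X) < 1 / 12"
      using \<open>c > 0\<close> by (simp add: dist_norm norm_minus_commute field_simps)
    moreover have "spec_norm Y \<le> spec_norm X + spec_norm (Y - X)"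
      using spec_norm_add[of X "Y - X"] by simp
    ultimately show "Y \<in> OmegaSet"
      using spec_norm_Stiefel[OF X] spec_norm_le_norm[of "Y - X"]
      by (simp add: OmegaSet_def c_def)
  qed
  then show "X \<in> interior OmegaSet"
    unfolding mem_interior using \<open>c > 0\<close> by (intro exI[of _ "1 / (12 * c)"]) simp
qed

lemma bounded_OmegaSet: "bounded (OmegaSet :: (real^'p^'n) set)"
  unfolding bounded_iff
proof (intro exI ballI)
  fix Y :: "real^'p^'n" assume "Y \<in> OmegaSet"
  then have "\<bar>Y $ i $ j\<bar> \<le> 13 / 12" for i j
    using matrix_component_le_onorm[of Y i j] by (simp add: OmegaSet_def spec_norm_def eta_contract_eq)
  then have "norm (Y $ i) \<le> real CARD('p) * (13 / 12)" for i
    using norm_le_l1_cart[of "Y $ i"] sum_mono[of UNIV "\<lambda>j. \<bar>Y $ i $ j\<bar>" "\<lambda>_. 13 / 12"] by simp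
  then have "(\<Sum>i\<in>UNIV. norm (Y $ i)) \<le> (\<Sum>i\<in>(UNIV::'n set). real CARD('p) * (13 / 12))"
    by (intro sum_mono)
  then have "(\<Sum>i\<in>UNIV. norm (Y $ i)) \<le> real CARD('n) * (real CARD('p) * (13 / 12))"
    by simp
  moreover have "norm Y \<le> (\<Sum>i\<in>UNIV. norm (Y $ i))"
    unfolding norm_vec_def by (rule L2_set_le_sum) simp
  ultimately show "norm Y \<le> real CARD('n) * (real CARD('p) * (13 / 12))"
    by linarith
qed

section \<open>The gradients of g and h\<close>

lemma transpose_Acal: "transpose (Acal Y) = Acal Y"
  by (simp add: Acal_def transpose_diff transpose_scalar matrix_transpose_mul)

lemma has_derivative_Acal:
  "(Acal has_derivative (\<lambda>D. - symPart (transpose Y ** D))) (at Y)"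
  unfolding Acal_def[abs_def]
  by (rule has_derivative_eq_rhs, (rule derivative_intros)+)
     (simp add: fun_eq_iff symPart_def matrix_transpose_mul algebra_simps)

(* The derivative of Y \<mapsto> Y ** Acal Y at Y. Being self-adjoint, it also carries
   grad f (Y ** Acal Y) to grad (gfun f) Y. *)
definition JA :: "real^'p^'n \<Rightarrow> real^'p^'n \<Rightarrow> real^'p^'n" where
  "JA Y D = D ** Acal Y - Y ** symPart (transpose Y ** D)"

lemma has_derivative_mult_Acal: "((\<lambda>Y. Y ** Acal Y) has_derivative JA Y) (at Y)"
  by (rule has_derivative_eq_rhs, (rule derivative_intros has_derivative_Acal)+)
     (simp add: fun_eq_iff JA_def matrix_minus_right)

lemma inner_JA_commute: "G \<bullet> JA Y D = JA Y G \<bullet> D"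
proof -
  have A: "G \<bullet> (D ** Acal Y) = (G ** Acal Y) \<bullet> D"
    by (metis inner_commute inner_matrix_mult_right transpose_Acal)
  have "G \<bullet> (Y ** symPart (transpose Y ** D)) = symPart (transpose Y ** D) \<bullet> (transpose Y ** G)"
    by (metis inner_commute inner_matrix_mult_left)
  also have "\<dots> = symPart (transpose Y ** G) \<bullet> (transpose Y ** D)"
    by (metis inner_commute inner_symPart_commute)
  also have "\<dots> = (Y ** symPart (transpose Y ** G)) \<bullet> D"
    by (metis inner_commute inner_matrix_mult_left transpose_transpose)
  finally show ?thesis
    unfolding JA_def inner_diff_left inner_diff_right A by simp
qed

lemma has_derivative_JA_comp:
  assumes "(W has_derivative W') (at X)"
  shows "((\<lambda>Y. JA Y (W Y)) has_derivative
           (\<lambda>D. JA X (W' D) - W X ** symPart (transpose X ** D) - D ** symPart (transpose X ** W X)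
                - X ** symPart (transpose D ** W X))) (at X)"
  unfolding JA_def
  by (rule has_derivative_eq_rhs, (rule derivative_intros has_derivative_Acal assms)+)
     (simp add: fun_eq_iff symPart_add matrix_add_ldistrib matrix_minus_right)

lemma grad_gfun:
  assumes "f differentiable (at (Y ** Acal Y))"
  shows "grad (gfun f) Y = JA Y (grad f (Y ** Acal Y))"
proof (rule grad_eqI)
  have "((\<lambda>Y. f (Y ** Acal Y)) has_derivative (\<lambda>D. grad f (Y ** Acal Y) \<bullet> JA Y D)) (at Y)"
    using has_derivative_compose[OF has_derivative_mult_Acal has_derivative_grad[OF assms]] .
  then show "(gfun f has_derivative (\<lambda>D. JA Y (grad f (Y ** Acal Y)) \<bullet> D)) (at Y)"
    by (simp add: gfun_def[abs_def] inner_JA_commute)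
qed

lemma has_derivative_penalty:
  fixes Y :: "real^'p^'n"
  shows "((\<lambda>Y. \<beta> / 4 * (norm (transpose Y ** Y - mat 1))\<^sup>2) has_derivative
           (\<lambda>D. (\<beta> *\<^sub>R (Y ** (transpose Y ** Y - mat 1))) \<bullet> D)) (at Y)"
  unfolding power2_norm_eq_inner
proof (rule has_derivative_eq_rhs, (rule derivative_intros)+, rule ext)
  fix D :: "real^'p^'n"
  define E where "E = transpose Y ** Y - mat 1"
  have "transpose E = E"
    by (simp add: E_def transpose_diff matrix_transpose_mul)
  then have "E \<bullet> (transpose D ** Y) = E \<bullet> (transpose Y ** D)"
    by (metis inner_transpose matrix_transpose_mul transpose_transpose)
  moreover have "E \<bullet> (transpose Y ** D) = (Y ** E) \<bullet> D"
    by (metis inner_commute inner_matrix_mult_left transpose_transpose)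
  ultimately show "\<beta> / 4 * (E \<bullet> (transpose Y ** D + transpose D ** Y - 0)
      + (transpose Y ** D + transpose D ** Y - 0) \<bullet> E) = (\<beta> *\<^sub>R (Y ** E)) \<bullet> D"
    by (simp add: inner_add_right inner_commute[of _ E])
qed

lemma grad_hfun:
  assumes "f differentiable (at (Y ** Acal Y))"
  shows "grad (hfun f \<beta>) Y = grad (gfun f) Y + \<beta> *\<^sub>R (Y ** (transpose Y ** Y - mat 1))"
proof (rule grad_eqI)
  show "(hfun f \<beta> has_derivative
          (\<lambda>D. (grad (gfun f) Y + \<beta> *\<^sub>R (Y ** (transpose Y ** Y - mat 1))) \<bullet> D)) (at Y)"
    unfolding hfun_def[abs_def] inner_add_left
    by (intro has_derivative_add has_derivative_penalty has_derivative_grad)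
       (use differentiable_chain_at[OF differentiableI[OF has_derivative_mult_Acal] assms] in
        \<open>simp add: gfun_def[abs_def] o_def\<close>)
qed

section \<open>Second-order behaviour at critical points on the Stiefel manifold\<close>

lemma Stiefel_mult_cancel: "X \<in> Stiefel \<Longrightarrow> transpose X ** (X ** M) = M"
  by (simp add: Stiefel_def matrix_mul_assoc)

lemma Acal_Stiefel: "X \<in> Stiefel \<Longrightarrow> Acal X = mat 1"
  by (simp add: Acal_def Stiefel_def vec_eq_iff mat_def)

lemma JA_Stiefel: "X \<in> Stiefel \<Longrightarrow> JA X D = D - X ** symPart (transpose X ** D)"
  by (simp add: JA_def Acal_Stiefel)

lemma JA_Stiefel_normal: "X \<in> Stiefel \<Longrightarrow> transpose L = L \<Longrightarrow> JA X (X ** L) = 0"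
  by (simp add: JA_Stiefel Stiefel_mult_cancel symPart_of_symmetric)

lemma grad_hfun_Stiefel:
  assumes "X \<in> Stiefel" and "f differentiable (at X)"
  shows "grad (hfun f \<beta>) X = grad (gfun f) X"
  using assms grad_hfun[of f X \<beta>] by (simp add: Acal_Stiefel Stiefel_def)

lemma hess_hfun_Stiefel:
  fixes X :: "real^'p^'n"
  assumes f: "\<forall>Y. f differentiable (at Y)" and X: "X \<in> Stiefel"
    and Lg: "(grad (gfun f) has_derivative Lg) (at X)"
  shows "hess (hfun f \<beta>) X D = Lg D + (2 * \<beta>) *\<^sub>R (X ** symPart (transpose X ** D))"
proof -
  have grad_eq: "grad (hfun f \<beta>) = (\<lambda>Y. grad (gfun f) Y + \<beta> *\<^sub>R (Y ** (transpose Y ** Y - mat 1)))"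
    by (simp add: fun_eq_iff grad_hfun f)
  have "(grad (hfun f \<beta>) has_derivative
      (\<lambda>D. Lg D + (2 * \<beta>) *\<^sub>R (X ** symPart (transpose X ** D)))) (at X)"
    unfolding grad_eq
  proof (rule has_derivative_eq_rhs, (rule Lg derivative_intros)+, rule ext)
    fix D :: "real^'p^'n"
    have XX: "transpose X ** X = mat 1"
      using X by (simp add: Stiefel_def)
    have sym: "transpose X ** D + transpose D ** X = 2 *\<^sub>R symPart (transpose X ** D)"
      by (simp add: symPart_def matrix_transpose_mul)
    show "Lg D + \<beta> *\<^sub>R (X ** (transpose X ** D + transpose D ** X - 0)
        + D ** (transpose X ** X - mat 1)) = Lg D + (2 * \<beta>) *\<^sub>R (X ** symPart (transpose X ** D))"
      unfolding XX sym by (simp add: matrix_scaleR_right)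
  qed
  then show ?thesis
    unfolding hess_def by (simp add: frechet_derivative_at[symmetric])
qed

(* At a critical point grad f X = X S with S symmetric, and JA X kills normal directions;
   hence the derivative of grad g maps normal directions to normal directions. *)
lemma derivative_grad_gfun_normal:
  fixes X :: "real^'p^'n"
  assumes f: "\<forall>Y. f differentiable (at Y)" and H: "(grad f has_derivative H) (at X)"
    and X: "X \<in> Stiefel" and crit: "grad (gfun f) X = 0"
  obtains Lg where "(grad (gfun f) has_derivative Lg) (at X)"
    and "\<And>L. transpose L = L \<Longrightarrow> \<exists>M. transpose M = M \<and> Lg (X ** L) = X ** M"
proof -
  define W where "W Y = grad f (Y ** Acal Y)" for Y
  have "X ** Acal X = X"
    using X by (simp add: Acal_Stiefel)
  then have W: "(W has_derivative (\<lambda>D. H (JA X D))) (at X)"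
    unfolding W_def using has_derivative_compose[OF has_derivative_mult_Acal, of "grad f" H] H
    by (simp add: o_def)
  have gg: "grad (gfun f) = (\<lambda>Y. JA Y (W Y))"
    by (simp add: fun_eq_iff grad_gfun f W_def)
  have Lg: "(grad (gfun f) has_derivative
      (\<lambda>D. JA X (H (JA X D)) - W X ** symPart (transpose X ** D) - D ** symPart (transpose X ** W X)
           - X ** symPart (transpose D ** W X))) (at X)"
    unfolding gg by (rule has_derivative_JA_comp[OF W])
  define S where "S = symPart (transpose X ** W X)"
  have WX: "W X = X ** S"
    using crit X by (simp add: gg JA_Stiefel S_def)
  have "\<exists>M. transpose M = M \<and>
      JA X (H (JA X (X ** L))) - W X ** symPart (transpose X ** (X ** L))
      - X ** L ** symPart (transpose X ** W X) - X ** symPart (transpose (X ** L) ** W X) = X ** M"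
    if L: "transpose L = L" for L
  proof (intro exI conjI)
    have S: "transpose S = S"
      by (simp add: S_def symPart_symmetric)
    show "transpose (- (S ** L + L ** S + symPart (L ** S))) = - (S ** L + L ** S + symPart (L ** S))"
      by (simp add: transpose_add transpose_diff transpose_minus matrix_transpose_mul L S
          symPart_symmetric algebra_simps)
    have "H (JA X (X ** L)) = 0"
      using JA_Stiefel_normal[OF X L] linear_0[OF has_derivative_linear[OF H]] by simp
    moreover have "L ** transpose X ** X = L"
      using X by (simp add: Stiefel_def flip: matrix_mul_assoc)
    ultimately show "JA X (H (JA X (X ** L))) - W X ** symPart (transpose X ** (X ** L))
        - X ** L ** symPart (transpose X ** W X) - X ** symPart (transpose (X ** L) ** W X)
        = X ** - (S ** L + L ** S + symPart (L ** S))"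
      using X
      by (simp add: JA_def WX Stiefel_def symPart_of_symmetric L S matrix_transpose_mul
          matrix_mul_assoc matrix_diff_ldistrib matrix_minus_right S_def[symmetric] symPart_zero)
  qed
  with Lg that show ?thesis by blast
qed

lemma lipschitz_on_bounded_sets_grad_gfun:
  fixes f :: "real^'p^'n \<Rightarrow> real"
  assumes "locally_lipschitz (grad f)"
  shows "lipschitz_on_bounded_sets (\<lambda>Y. JA Y (grad f (Y ** Acal Y)))"
proof -
  note bilinear = lipschitz_on_bounded_sets_bilinear[OF bounded_bilinear_matrix_mult]
    and linear = lipschitz_on_bounded_sets_compose[OF lipschitz_on_bounded_sets_linear]
    and basic = lipschitz_on_bounded_sets_ident lipschitz_on_bounded_sets_const
  have A: "lipschitz_on_bounded_sets Acal"
    unfolding Acal_def[abs_def]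
    by (intro lipschitz_on_bounded_sets_diff linear[OF bounded_linear_scaleR_right]
        bilinear linear[OF bounded_linear_transpose] basic)
  have W: "lipschitz_on_bounded_sets (\<lambda>Y. grad f (Y ** Acal Y))"
    by (intro lipschitz_on_bounded_sets_compose[OF locally_lipschitz_imp_lipschitz_on_bounded_sets[OF assms]]
        bilinear A basic)
  show ?thesis
    unfolding JA_def
    by (intro lipschitz_on_bounded_sets_diff bilinear linear[OF bounded_linear_symPart]
        linear[OF bounded_linear_transpose] A W basic)
qed

lemma norm_derivative_grad_gfun_le_M2:
  fixes f :: "real^'p^'n \<Rightarrow> real"
  assumes f: "\<forall>Y. f differentiable (at Y)" and gradf_lip: "locally_lipschitz (grad f)"
    and X: "X \<in> Stiefel" and Lg: "(grad (gfun f) has_derivative Lg) (at X)"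
  shows "norm (Lg D) \<le> M2 f * norm D"
proof -
  have "grad (gfun f) = (\<lambda>Y. JA Y (grad f (Y ** Acal Y)))"
    by (simp add: fun_eq_iff grad_gfun f)
  then obtain C where "C-lipschitz_on OmegaSet (grad (gfun f))"
    using lipschitz_on_bounded_sets_grad_gfun[OF gradf_lip] bounded_OmegaSet
    unfolding lipschitz_on_bounded_sets_def by auto
  then show ?thesis
    unfolding M2_def
    using norm_derivative_le_SUP_difference_quotient[OF Lg] Stiefel_subset_interior_OmegaSet X
    by blast
qed

lemma hess_hfun_normal:
  fixes X :: "real^'p^'n"
  assumes f_diff: "\<forall>Y. f differentiable (at Y)" and gradf_lip: "locally_lipschitz (grad f)"
    and f_twice: "grad f differentiable (at X)" and X: "X \<in> Stiefel"
    and crit: "grad (hfun f \<beta>) X = 0" and L: "transpose L = L"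
  obtains M where "transpose M = M"
    and "hess (hfun f \<beta>) X (X ** L) = X ** M + (2 * \<beta>) *\<^sub>R (X ** L)"
    and "norm (X ** M) \<le> M2 f * norm (X ** L)"
proof -
  obtain H where "(grad f has_derivative H) (at X)"
    using f_twice by (auto simp: differentiable_def)
  moreover have "grad (gfun f) X = 0"
    using crit grad_hfun_Stiefel[OF X] f_diff by simp
  ultimately obtain Lg where Lg: "(grad (gfun f) has_derivative Lg) (at X)"
    and "\<And>L. transpose L = L \<Longrightarrow> \<exists>M. transpose M = M \<and> Lg (X ** L) = X ** M"
    using derivative_grad_gfun_normal[OF f_diff _ X] by metis
  then obtain M where "transpose M = M" and M: "Lg (X ** L) = X ** M"
    using L by blast
  moreover have "hess (hfun f \<beta>) X (X ** L) = X ** M + (2 * \<beta>) *\<^sub>R (X ** L)"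
    using hess_hfun_Stiefel[OF f_diff X Lg] X
    by (simp add: M Stiefel_mult_cancel symPart_of_symmetric L)
  moreover have "norm (X ** M) \<le> M2 f * norm (X ** L)"
    using norm_derivative_grad_gfun_le_M2[OF f_diff gradf_lip X Lg, of "X ** L"] unfolding M .
  ultimately show ?thesis
    using that by blast
qed

lemma inner_tangentSp_normal:
  assumes "D \<in> tangentSp X" and "transpose M = M"
  shows "D \<bullet> (X ** M) = 0"
proof -
  have "symPart (transpose D ** X) = 0"
    using assms(1) by (simp add: tangentSp_def)
  then have "transpose (transpose X ** D) = - (transpose X ** D)"
    by (simp add: symPart_def matrix_transpose_mul eq_neg_iff_add_eq_0 add.commute)
  then have "(transpose X ** D) \<bullet> M = 0"
    using assms(2) by (rule inner_skew_symmetric)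
  then show ?thesis
    by (metis inner_commute inner_matrix_mult_left)
qed

theorem mainTheorem11:
  fixes f :: "real^'p^'n \<Rightarrow> real" and \<beta> :: real and X D1 D2 :: "real^'p^'n"
  assumes f_diff: "\<forall>Y. f differentiable (at Y)"
    and f_lip: "locally_lipschitz f"
    and gradf_lip: "locally_lipschitz (grad f)"
    and f_twice: "\<forall>Y. grad f differentiable (at Y)"
    and beta_pos: "\<beta> > 0"
    and X_st: "X \<in> Stiefel"
    and crit: "grad (hfun f \<beta>) X = 0"
    and D1: "D1 \<in> tangentSp X"
    and D2: "D2 \<in> normalSp X"
  shows "D2 \<bullet> hess (hfun f \<beta>) X D2 \<ge> (2 * \<beta> - M2 f) * (norm D2)^2
         \<and> D1 \<bullet> hess (hfun f \<beta>) X D2 = 0"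
proof -
  obtain L where L: "transpose L = L" and D2L: "D2 = X ** L"
    using D2 by (auto simp: normalSp_def)
  obtain M where M: "transpose M = M"
    and hess: "hess (hfun f \<beta>) X D2 = X ** M + (2 * \<beta>) *\<^sub>R D2"
    and bound: "norm (X ** M) \<le> M2 f * norm D2"
    using hess_hfun_normal[OF f_diff gradf_lip _ X_st crit L] f_twice unfolding D2L by blast
  have "\<bar>D2 \<bullet> (X ** M)\<bar> \<le> norm D2 * norm (X ** M)"
    by (rule Cauchy_Schwarz_ineq2)
  also have "\<dots> \<le> norm D2 * (M2 f * norm D2)"
    by (simp add: mult_left_mono bound)
  finally have "- (M2 f * (norm D2)\<^sup>2) \<le> D2 \<bullet> (X ** M)"
    by (simp add: power2_eq_square mult_ac)
  then have "D2 \<bullet> hess (hfun f \<beta>) X D2 \<ge> (2 * \<beta> - M2 f) * (norm D2)^2"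
    by (simp add: hess inner_add_right power2_norm_eq_inner left_diff_distrib)
  moreover have "D1 \<bullet> hess (hfun f \<beta>) X D2 = 0"
    unfolding hess inner_add_right inner_scaleR_right
    unfolding D2L using inner_tangentSp_normal[OF D1] L M by simp
  ultimately show ?thesis ..
qed

end
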